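(* For each integer $0\le k\le4$ and every $x\in\mathbb{R}$, \[ \big|H^{(k)}(x)-\big(i^ke^{ix}\alpha(x)+(2i)^ke^{2ix}\beta(x)\big)\big|\le\frac18 \qquad\text{and}\qquad |H^{(k)}(x)|\le 2^k+2. \]
   Context: Rudin–Shapiro polynomials: $P_0(z)=Q_0(z)=1$ and for $s\ge0$, $P_{s+1}(z)=P_s(z)+z^{2^s}Q_s(z)$, $Q_{s+1}(z)=P_s(z)-z^{2^s}Q_s(z)$. Let $t$ be an odd positive integer and $T:=2^{t+10}$. For $x\in\mathbb{R}$ define $\alpha(x):=2^{-(t+1)/2}P_t(e^{ix/T})$, $\beta(x):=2^{-(t+1)/2}Q_t(e^{ix/T})$, and $H(x):=e^{ix}\alpha(x)+e^{2ix}\beta(x)$. $H^{(k)}$ denotes the $k$-th derivative. *)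

theory Defs
  imports "HOL-Analysis.Analysis"
begin

text \<open>Rudin--Shapiro polynomials, as a pair (P_s, Q_s) of functions on the complex plane.\<close>
fun RS_pair :: "nat \<Rightarrow> (complex \<Rightarrow> complex) \<times> (complex \<Rightarrow> complex)" where
  "RS_pair 0 = ((\<lambda>z. 1), (\<lambda>z. 1))"
| "RS_pair (Suc s) =
     ((\<lambda>z. fst (RS_pair s) z + z ^ (2 ^ s) * snd (RS_pair s) z),
      (\<lambda>z. fst (RS_pair s) z - z ^ (2 ^ s) * snd (RS_pair s) z))"

definition RS_P :: "nat \<Rightarrow> complex \<Rightarrow> complex" where
  "RS_P s = fst (RS_pair s)"

definition RS_Q :: "nat \<Rightarrow> complex \<Rightarrow> complex" where
  "RS_Q s = snd (RS_pair s)"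

definition RS_T :: "nat \<Rightarrow> real" where
  "RS_T t = 2 ^ (t + 10)"

definition RS_alpha :: "nat \<Rightarrow> real \<Rightarrow> complex" where
  "RS_alpha t x = complex_of_real (2 powr (- (real t + 1) / 2))
      * RS_P t (exp (\<i> * complex_of_real (x / RS_T t)))"

definition RS_beta :: "nat \<Rightarrow> real \<Rightarrow> complex" where
  "RS_beta t x = complex_of_real (2 powr (- (real t + 1) / 2))
      * RS_Q t (exp (\<i> * complex_of_real (x / RS_T t)))"

definition RS_H :: "nat \<Rightarrow> real \<Rightarrow> complex" where
  "RS_H t x = exp (\<i> * complex_of_real x) * RS_alpha t x
      + exp (2 * \<i> * complex_of_real x) * RS_beta t x"

definition higher_vderiv :: "nat \<Rightarrow> (real \<Rightarrow> 'a::real_normed_vector) \<Rightarrow> real \<Rightarrow> 'a" where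
  "higher_vderiv k f = ((\<lambda>g x. vector_derivative g (at x)) ^^ k) f"

end

theory Submission
  imports Defs
begin

text \<open>
Expanding P_t and Q_t into their coefficients writes H as an exponential sum with
frequencies 1 + n/T and 2 + n/T, n < 2^t. Differentiating k times and expanding these frequencies
binomially gives the Leibniz formula
H^(k) = \<Sum>_j C(k,j) (i^(k-j) e^(ix) \<alpha>^(j) + (2i)^(k-j) e^(2ix) \<beta>^(j)),
whose term j = 0 is the main term. Along the Rudin--Shapiro recursion, the Leibniz rule and the
parallelogram law give |D^j P_s|^2 + |D^j Q_s|^2 \<le> 4^(sj) 2^(s+1) for the
\<theta>-derivatives of P_s(e^(i\<theta>)) and Q_s(e^(i\<theta>)). Since T = 2^(t+10), this yields
|\<alpha>^(j)|, |\<beta>^(j)| \<le> 1024^(-j), so the terms with j \<ge> 1 add up to at most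
(2^k + 3^k)/1024 < 1/8.
\<close>

lemma higher_vderiv_eqI:
  assumes "f = g 0" and "\<And>k x. (g k has_vector_derivative g (Suc k) x) (at x)"
  shows "higher_vderiv k f = g k"
proof (induction k)
  case 0
  then show ?case using assms(1) by (simp add: higher_vderiv_def)
next
  case (Suc k)
  then show ?case
    by (auto simp: higher_vderiv_def intro!: vector_derivative_at assms(2))
qed

lemma has_vector_derivative_exp_sum:
  "((\<lambda>x. \<Sum>n\<in>A. c n * (\<i> * of_real (\<omega> n)) ^ k * exp (\<i> * of_real (\<omega> n * x)))
     has_vector_derivative
     (\<Sum>n\<in>A. c n * (\<i> * of_real (\<omega> n)) ^ Suc k * exp (\<i> * of_real (\<omega> n * x)))) (at x)"
proof -
  have "((\<lambda>x. exp (\<i> * of_real (\<omega> n * x))) has_vector_derivative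
          \<i> * of_real (\<omega> n) * exp (\<i> * of_real (\<omega> n * x))) (at x)" for n
  proof -
    have "((\<lambda>z. exp (\<i> * of_real (\<omega> n) * z)) has_field_derivative
            exp (\<i> * of_real (\<omega> n) * of_real x) * (\<i> * of_real (\<omega> n))) (at (of_real x))"
      by (auto intro!: derivative_eq_intros)
    from has_vector_derivative_real_field[OF this] show ?thesis
      by (simp add: mult_ac)
  qed
  then show ?thesis
    by (intro has_vector_derivative_sum has_vector_derivative_eq_rhs
          [OF has_vector_derivative_mult_right]) (auto simp: mult_ac)
qed

lemma sum_lessThan_double:
  fixes N :: nat
  shows "(\<Sum>n<2 * N. f n) = (\<Sum>n<N. f n) + (\<Sum>n<N. f (n + N))"
proof -
  have "(\<Sum>n<2 * N. f n) = sum f {0..<N} + sum f {N..<N + N}"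
    by (simp add: atLeast0LessThan[symmetric] mult_2 sum.atLeastLessThan_concat)
  also have "sum f {N..<N + N} = (\<Sum>n<N. f (n + N))"
    by (simp add: atLeast0LessThan[symmetric] sum.shift_bounds_nat_ivl[of f 0 N N, simplified])
  finally show ?thesis
    by (simp add: atLeast0LessThan)
qed

lemma parallelogram_law:
  fixes x y :: "'a::real_inner"
  shows "norm (x + y) ^ 2 + norm (x - y) ^ 2 = 2 * (norm x ^ 2 + norm y ^ 2)"
  by (simp add: power2_norm_eq_inner algebra_simps)

lemma sum_squares_add_le:
  fixes a b Y K :: real
  assumes "a ^ 2 + b ^ 2 \<le> Y ^ 2" "0 \<le> b" "0 \<le> Y" "1 \<le> K"
  shows "a ^ 2 + (b + (K - 1) * Y) ^ 2 \<le> (K * Y) ^ 2"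
proof -
  have "b ^ 2 \<le> Y ^ 2"
    using assms(1) zero_le_power2[of a] by linarith
  then have "b \<le> Y"
    using assms(3) by (rule power2_le_imp_le)
  then have "b * ((K - 1) * Y) \<le> Y * ((K - 1) * Y)"
    using assms(3,4) by (intro mult_right_mono) auto
  with assms(1) show ?thesis
    by (simp add: power2_eq_square algebra_simps)
qed

lemma norm_binomial_sum_le:
  fixes N Y :: real and z :: "nat \<Rightarrow> complex"
  assumes "0 \<le> N" and "\<And>m. m < j \<Longrightarrow> cmod (z m) \<le> N ^ m * Y"
  shows "cmod (\<Sum>m\<le>j. of_nat (j choose m) * (\<i> * of_real N) ^ (j - m) * z m)
           \<le> cmod (z j) + (2 ^ j - 1) * N ^ j * Y"
proof -
  have tail: "(j choose m) * N ^ (j - m) * cmod (z m) \<le> (j choose m) * (N ^ j * Y)" if "m < j" for m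
  proof -
    have "N ^ (j - m) * cmod (z m) \<le> N ^ (j - m) * (N ^ m * Y)"
      using assms that by (intro mult_left_mono) auto
    also have "\<dots> = N ^ j * Y"
      using that by (simp add: power_add[symmetric])
    finally show ?thesis
      by (simp add: mult.assoc mult_left_mono)
  qed
  have "(\<Sum>m<j. j choose m) + 1 = 2 ^ j"
    using choose_row_sum[of j] by (simp add: lessThan_Suc_atMost[symmetric])
  then have row_sum: "(\<Sum>m<j. real (j choose m)) = 2 ^ j - 1"
    by (metis add_diff_cancel_right' of_nat_1 of_nat_add of_nat_numeral of_nat_power of_nat_sum)
  have "cmod (\<Sum>m\<le>j. of_nat (j choose m) * (\<i> * of_real N) ^ (j - m) * z m)
          \<le> (\<Sum>m\<le>j. (j choose m) * N ^ (j - m) * cmod (z m))"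
    by (rule order_trans[OF norm_sum]) (simp add: norm_mult norm_power assms(1))
  also have "\<dots> = cmod (z j) + (\<Sum>m<j. (j choose m) * N ^ (j - m) * cmod (z m))"
    by (simp add: lessThan_Suc_atMost[symmetric])
  also have "\<dots> \<le> cmod (z j) + (\<Sum>m<j. (j choose m) * (N ^ j * Y))"
    using tail by (intro add_left_mono sum_mono) auto
  also have "\<dots> = cmod (z j) + (2 ^ j - 1) * N ^ j * Y"
    by (simp add: sum_distrib_right[symmetric] row_sum mult.assoc)
  finally show ?thesis .
qed

lemma norm_binomial_tail_le:
  fixes z :: "nat \<Rightarrow> complex" and \<epsilon> :: real
  assumes "0 \<le> \<epsilon>" "\<epsilon> \<le> 1" and z_le: "\<And>j. cmod (z j) \<le> \<epsilon> ^ j * (1 + 2 ^ (k - j))"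
  shows "cmod ((\<Sum>j\<le>k. of_nat (k choose j) * z j) - z 0) \<le> \<epsilon> * (2 ^ k + 3 ^ k)"
proof -
  have "{..k} = insert 0 {1..k}"
    by auto
  then have "(\<Sum>j\<le>k. of_nat (k choose j) * z j) - z 0 = (\<Sum>j\<in>{1..k}. of_nat (k choose j) * z j)"
    by simp
  also have "cmod \<dots> \<le> (\<Sum>j\<in>{1..k}. (k choose j) * (\<epsilon> * (1 + 2 ^ (k - j))))"
  proof (rule order_trans[OF norm_sum sum_mono])
    fix j :: nat assume "j \<in> {1..k}"
    then have "\<epsilon> ^ j \<le> \<epsilon> ^ 1"
      using assms(1,2) by (intro power_decreasing) auto
    then have "\<epsilon> ^ j * (1 + 2 ^ (k - j)) \<le> \<epsilon> * (1 + 2 ^ (k - j))"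
      by (intro mult_right_mono) auto
    then have "cmod (z j) \<le> \<epsilon> * (1 + 2 ^ (k - j))"
      using z_le[of j] by linarith
    then show "cmod (of_nat (k choose j) * z j) \<le> (k choose j) * (\<epsilon> * (1 + 2 ^ (k - j)))"
      by (simp add: norm_mult mult_left_mono)
  qed
  also have "\<dots> \<le> (\<Sum>j\<le>k. (k choose j) * (\<epsilon> * (1 + 2 ^ (k - j))))"
    using assms(1) by (intro sum_mono2) auto
  also have "\<dots> = \<epsilon> * ((\<Sum>j\<le>k. real (k choose j)) + (\<Sum>j\<le>k. real (k choose j) * 2 ^ (k - j)))"
    by (simp add: sum_distrib_left sum.distrib algebra_simps)
  also have "(\<Sum>j\<le>k. real (k choose j)) = 2 ^ k"
    using choose_row_sum[of k] by (metis of_nat_numeral of_nat_power of_nat_sum)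
  also have "(\<Sum>j\<le>k. real (k choose j) * 2 ^ (k - j)) = 3 ^ k"
    using binomial_ring[of "1::real" 2 k] by simp
  finally show ?thesis .
qed

definition trig_poly_deriv :: "(nat \<Rightarrow> complex) \<Rightarrow> nat \<Rightarrow> nat \<Rightarrow> real \<Rightarrow> complex" where
  "trig_poly_deriv a N j \<theta> = (\<Sum>n<N. a n * (\<i> * of_nat n) ^ j * exp (\<i> * of_real (real n * \<theta>)))"

lemma trig_poly_deriv_cong:
  "(\<And>n. n < N \<Longrightarrow> a n = b n) \<Longrightarrow> trig_poly_deriv a N j \<theta> = trig_poly_deriv b N j \<theta>"
  by (simp add: trig_poly_deriv_def)

lemma trig_poly_deriv_uminus:
  "trig_poly_deriv (\<lambda>n. - a n) N j \<theta> = - trig_poly_deriv a N j \<theta>"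
  by (simp add: trig_poly_deriv_def sum_negf)

lemma trig_poly_deriv_shift:
  "(\<Sum>n<N. a n * (\<i> * of_real (real n + \<mu>)) ^ j * exp (\<i> * of_real ((real n + \<mu>) * \<theta>))) =
     exp (\<i> * of_real (\<mu> * \<theta>)) *
     (\<Sum>m\<le>j. of_nat (j choose m) * (\<i> * of_real \<mu>) ^ (j - m) * trig_poly_deriv a N m \<theta>)"
proof -
  have "a n * (\<i> * of_real (real n + \<mu>)) ^ j * exp (\<i> * of_real ((real n + \<mu>) * \<theta>)) =
        exp (\<i> * of_real (\<mu> * \<theta>)) * (\<Sum>m\<le>j. of_nat (j choose m) * (\<i> * of_real \<mu>) ^ (j - m) *
          (a n * (\<i> * of_nat n) ^ m * exp (\<i> * of_real (real n * \<theta>))))" for n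
  proof -
    have "(\<i> * of_real (real n + \<mu>)) ^ j = (\<i> * of_nat n + \<i> * of_real \<mu>) ^ j"
      by (simp add: algebra_simps)
    also have "\<dots> = (\<Sum>m\<le>j. of_nat (j choose m) * (\<i> * of_nat n) ^ m * (\<i> * of_real \<mu>) ^ (j - m))"
      by (rule binomial_ring)
    moreover have "exp (\<i> * of_real ((real n + \<mu>) * \<theta>)) =
                   exp (\<i> * of_real (real n * \<theta>)) * exp (\<i> * of_real (\<mu> * \<theta>))"
      by (simp add: exp_add[symmetric] algebra_simps)
    ultimately show ?thesis
      by (simp add: sum_distrib_left sum_distrib_right mult_ac)
  qed
  then show ?thesis
    by (simp add: trig_poly_deriv_def sum_distrib_left sum.swap[of _ "{..j}"] mult_ac)
qed

lemma trig_poly_deriv_double: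
  "trig_poly_deriv a (2 * N) j \<theta> = trig_poly_deriv a N j \<theta> + exp (\<i> * of_real (real N * \<theta>)) *
     (\<Sum>m\<le>j. of_nat (j choose m) * (\<i> * of_nat N) ^ (j - m) * trig_poly_deriv (\<lambda>n. a (n + N)) N m \<theta>)"
  using trig_poly_deriv_shift[where a = "\<lambda>n. a (n + N)" and \<mu> = "real N"]
  by (simp add: trig_poly_deriv_def sum_lessThan_double)

lemma exp_sum_expand_trig_poly_deriv:
  fixes T w x :: real
  assumes "T \<noteq> 0"
  shows "(\<Sum>n<N. a n * (\<i> * of_real (w + real n / T)) ^ k * exp (\<i> * of_real ((w + real n / T) * x)))
    = exp (\<i> * of_real (w * x)) *
      (\<Sum>j\<le>k. of_nat (k choose j) * (\<i> * of_real w) ^ (k - j)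
                 * (trig_poly_deriv a N j (x / T) / of_real T ^ j))"
proof -
  define \<mu> where "\<mu> = w * T"
  define D where "D j = trig_poly_deriv a N j (x / T)" for j
  have "w + real n / T = (real n + \<mu>) / T" "(w + real n / T) * x = (real n + \<mu>) * (x / T)" for n
    using assms by (simp_all add: \<mu>_def field_simps)
  then have "(\<Sum>n<N. a n * (\<i> * of_real (w + real n / T)) ^ k * exp (\<i> * of_real ((w + real n / T) * x)))
      = (\<Sum>n<N. a n * (\<i> * of_real (real n + \<mu>)) ^ k * exp (\<i> * of_real ((real n + \<mu>) * (x / T))))
        / of_real T ^ k"
    by (simp only: of_real_divide times_divide_eq_right times_divide_eq_left power_divide
                   sum_divide_distrib)
  also have "\<dots> = exp (\<i> * of_real (\<mu> * (x / T)))
      * (\<Sum>j\<le>k. of_nat (k choose j) * (\<i> * of_real \<mu>) ^ (k - j) * D j) / of_real T ^ k"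
    by (simp only: trig_poly_deriv_shift D_def)
  also have "\<dots> = exp (\<i> * of_real (w * x))
      * (\<Sum>j\<le>k. of_nat (k choose j) * (\<i> * of_real w) ^ (k - j) * (D j / of_real T ^ j))"
  proof -
    have "of_nat (k choose j) * (\<i> * of_real \<mu>) ^ (k - j) * D j / of_real T ^ k
        = of_nat (k choose j) * (\<i> * of_real w) ^ (k - j) * (D j / of_real T ^ j)"
      if "j \<le> k" for j
    proof -
      have "of_real T ^ k = of_real T ^ (k - j) * (of_real T ^ j :: complex)"
        using that by (simp flip: power_add)
      then show ?thesis
        using assms by (simp add: \<mu>_def power_mult_distrib)
    qed
    then have "(\<Sum>j\<le>k. of_nat (k choose j) * (\<i> * of_real \<mu>) ^ (k - j) * D j) / of_real T ^ k
        = (\<Sum>j\<le>k. of_nat (k choose j) * (\<i> * of_real w) ^ (k - j) * (D j / of_real T ^ j))"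
      unfolding sum_divide_distrib by (intro sum.cong) auto
    moreover have "\<mu> * (x / T) = w * x"
      using assms by (simp add: \<mu>_def)
    ultimately show ?thesis
      by (simp only: times_divide_eq_right[symmetric] mult.assoc)
  qed
  finally show ?thesis
    by (simp only: D_def)
qed

fun RS_coeffs :: "nat \<Rightarrow> (nat \<Rightarrow> complex) \<times> (nat \<Rightarrow> complex)" where
  "RS_coeffs 0 = ((\<lambda>n. if n = 0 then 1 else 0), (\<lambda>n. if n = 0 then 1 else 0))"
| "RS_coeffs (Suc s) =
     ((\<lambda>n. if n < 2 ^ s then fst (RS_coeffs s) n else snd (RS_coeffs s) (n - 2 ^ s)),
      (\<lambda>n. if n < 2 ^ s then fst (RS_coeffs s) n else - snd (RS_coeffs s) (n - 2 ^ s)))"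

definition RS_P_coeff :: "nat \<Rightarrow> nat \<Rightarrow> complex" where
  "RS_P_coeff s = fst (RS_coeffs s)"

definition RS_Q_coeff :: "nat \<Rightarrow> nat \<Rightarrow> complex" where
  "RS_Q_coeff s = snd (RS_coeffs s)"

lemma RS_P_coeff_Suc:
  "RS_P_coeff (Suc s) n = (if n < 2 ^ s then RS_P_coeff s n else RS_Q_coeff s (n - 2 ^ s))"
  by (simp add: RS_P_coeff_def RS_Q_coeff_def)

lemma RS_Q_coeff_Suc:
  "RS_Q_coeff (Suc s) n = (if n < 2 ^ s then RS_P_coeff s n else - RS_Q_coeff s (n - 2 ^ s))"
  by (simp add: RS_P_coeff_def RS_Q_coeff_def)

lemma RS_P_Q_eq_coeff_sums:
  "RS_P s z = (\<Sum>n<2 ^ s. RS_P_coeff s n * z ^ n) \<and> RS_Q s z = (\<Sum>n<2 ^ s. RS_Q_coeff s n * z ^ n)"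
proof (induction s)
  case 0
  then show ?case
    by (simp add: RS_P_def RS_Q_def RS_P_coeff_def RS_Q_coeff_def)
next
  case (Suc s)
  have "z ^ 2 ^ s * (\<Sum>n<2 ^ s. RS_Q_coeff s n * z ^ n)
      = (\<Sum>n<2 ^ s. RS_Q_coeff s n * z ^ (n + 2 ^ s))"
    by (simp add: sum_distrib_left power_add mult_ac)
  with Suc show ?case
    by (simp add: RS_P_def RS_Q_def sum_lessThan_double RS_P_coeff_Suc RS_Q_coeff_Suc sum_negf)
qed

lemma trig_poly_deriv_RS_Suc:
  defines "B \<equiv> \<lambda>s j \<theta>. \<Sum>m\<le>j. of_nat (j choose m) * (\<i> * 2 ^ s) ^ (j - m) *
                           trig_poly_deriv (RS_Q_coeff s) (2 ^ s) m \<theta>"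
  shows "trig_poly_deriv (RS_P_coeff (Suc s)) (2 ^ Suc s) j \<theta> =
           trig_poly_deriv (RS_P_coeff s) (2 ^ s) j \<theta> + exp (\<i> * of_real (2 ^ s * \<theta>)) * B s j \<theta>"
    and "trig_poly_deriv (RS_Q_coeff (Suc s)) (2 ^ Suc s) j \<theta> =
           trig_poly_deriv (RS_P_coeff s) (2 ^ s) j \<theta> - exp (\<i> * of_real (2 ^ s * \<theta>)) * B s j \<theta>"
proof -
  have "trig_poly_deriv (RS_P_coeff (Suc s)) (2 ^ s) j \<theta> = trig_poly_deriv (RS_P_coeff s) (2 ^ s) j \<theta>"
       "trig_poly_deriv (RS_Q_coeff (Suc s)) (2 ^ s) j \<theta> = trig_poly_deriv (RS_P_coeff s) (2 ^ s) j \<theta>"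
    by (auto intro: trig_poly_deriv_cong simp: RS_P_coeff_Suc RS_Q_coeff_Suc)
  moreover have "(\<lambda>n. RS_P_coeff (Suc s) (n + 2 ^ s)) = RS_Q_coeff s"
                "(\<lambda>n. RS_Q_coeff (Suc s) (n + 2 ^ s)) = (\<lambda>n. - RS_Q_coeff s n)"
    by (simp_all add: RS_P_coeff_Suc RS_Q_coeff_Suc)
  ultimately show "trig_poly_deriv (RS_P_coeff (Suc s)) (2 ^ Suc s) j \<theta> =
           trig_poly_deriv (RS_P_coeff s) (2 ^ s) j \<theta> + exp (\<i> * of_real (2 ^ s * \<theta>)) * B s j \<theta>"
    and "trig_poly_deriv (RS_Q_coeff (Suc s)) (2 ^ Suc s) j \<theta> =
           trig_poly_deriv (RS_P_coeff s) (2 ^ s) j \<theta> - exp (\<i> * of_real (2 ^ s * \<theta>)) * B s j \<theta>"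
    by (simp_all add: trig_poly_deriv_double B_def trig_poly_deriv_uminus sum_negf)
qed

text \<open>For j = 0 this is the classical bound |P_s|^2 + |Q_s|^2 \<le> 2^(s+1) on the unit circle.\<close>

lemma RS_trig_poly_deriv_norm_sq_le:
  "cmod (trig_poly_deriv (RS_P_coeff s) (2 ^ s) j \<theta>) ^ 2
     + cmod (trig_poly_deriv (RS_Q_coeff s) (2 ^ s) j \<theta>) ^ 2
   \<le> (((2::real) ^ s) ^ j) ^ 2 * 2 ^ Suc s"
proof (induction s arbitrary: j)
  case 0
  then show ?case
    by (simp add: trig_poly_deriv_def RS_P_coeff_def RS_Q_coeff_def power_0_left)
next
  case (Suc s)
  define N :: real where "N = 2 ^ s"
  define Y where "Y m = N ^ m * sqrt (2 * N)" for m
  define P where "P m = trig_poly_deriv (RS_P_coeff s) (2 ^ s) m \<theta>" for m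
  define Q where "Q m = trig_poly_deriv (RS_Q_coeff s) (2 ^ s) m \<theta>" for m
  define B where "B = (\<Sum>m\<le>j. of_nat (j choose m) * (\<i> * of_real N) ^ (j - m) * Q m)"
  have "N > 0"
    by (simp add: N_def)
  have IH: "cmod (P m) ^ 2 + cmod (Q m) ^ 2 \<le> Y m ^ 2" for m
    using Suc.IH[of m] \<open>N > 0\<close> by (simp add: P_def Q_def Y_def N_def power_mult_distrib)
  have "cmod (Q m) \<le> Y m" for m
  proof (rule power2_le_imp_le)
    show "cmod (Q m) ^ 2 \<le> Y m ^ 2"
      using IH[of m] zero_le_power2[of "cmod (P m)"] by linarith
    show "0 \<le> Y m"
      using \<open>N > 0\<close> by (simp add: Y_def)
  qed
  then have "cmod B \<le> cmod (Q j) + (2 ^ j - 1) * Y j"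
    using norm_binomial_sum_le[of N j Q "sqrt (2 * N)"] \<open>N > 0\<close> by (simp add: B_def Y_def mult.assoc)
  then have "cmod (P j) ^ 2 + cmod B ^ 2 \<le> cmod (P j) ^ 2 + (cmod (Q j) + (2 ^ j - 1) * Y j) ^ 2"
    by (simp add: power_mono)
  also have "\<dots> \<le> (2 ^ j * Y j) ^ 2"
    using IH[of j] \<open>N > 0\<close> by (intro sum_squares_add_le) (auto simp: Y_def)
  finally have PB: "cmod (P j) ^ 2 + cmod B ^ 2 \<le> (2 ^ j * Y j) ^ 2" .
  have "cmod (trig_poly_deriv (RS_P_coeff (Suc s)) (2 ^ Suc s) j \<theta>) ^ 2
          + cmod (trig_poly_deriv (RS_Q_coeff (Suc s)) (2 ^ Suc s) j \<theta>) ^ 2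
        = 2 * (cmod (P j) ^ 2 + cmod (exp (\<i> * of_real (2 ^ s * \<theta>)) * B) ^ 2)"
    unfolding trig_poly_deriv_RS_Suc by (simp add: parallelogram_law P_def Q_def B_def N_def)
  also have "\<dots> \<le> 2 * (2 ^ j * Y j) ^ 2"
    using PB by (simp add: norm_mult)
  also have "\<dots> = (((2::real) ^ Suc s) ^ j) ^ 2 * 2 ^ Suc (Suc s)"
    using \<open>N > 0\<close> by (simp add: Y_def N_def power_mult_distrib)
  finally show ?case .
qed

lemma norm_trig_poly_deriv_RS_le:
  "cmod (trig_poly_deriv (RS_P_coeff s) (2 ^ s) j \<theta>) \<le> (2 ^ s) ^ j * sqrt (2 ^ Suc s)"
  "cmod (trig_poly_deriv (RS_Q_coeff s) (2 ^ s) j \<theta>) \<le> (2 ^ s) ^ j * sqrt (2 ^ Suc s)"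
proof -
  have sq: "(2 ^ s) ^ j * sqrt (2 ^ Suc s) = sqrt ((((2::real) ^ s) ^ j) ^ 2 * 2 ^ Suc s)"
    by (simp add: real_sqrt_mult)
  show "cmod (trig_poly_deriv (RS_P_coeff s) (2 ^ s) j \<theta>) \<le> (2 ^ s) ^ j * sqrt (2 ^ Suc s)"
       "cmod (trig_poly_deriv (RS_Q_coeff s) (2 ^ s) j \<theta>) \<le> (2 ^ s) ^ j * sqrt (2 ^ Suc s)"
    unfolding sq
    by (rule real_le_rsqrt, rule order_trans[OF _ RS_trig_poly_deriv_norm_sq_le[of s j \<theta>]], simp)+
qed

text \<open>These are the j-th derivatives of RS_alpha t and RS_beta t, but only the formulas are used.\<close>

definition RS_alpha_deriv :: "nat \<Rightarrow> nat \<Rightarrow> real \<Rightarrow> complex" where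
  "RS_alpha_deriv t j x = of_real (2 powr (- (real t + 1) / 2) / RS_T t ^ j)
      * trig_poly_deriv (RS_P_coeff t) (2 ^ t) j (x / RS_T t)"

definition RS_beta_deriv :: "nat \<Rightarrow> nat \<Rightarrow> real \<Rightarrow> complex" where
  "RS_beta_deriv t j x = of_real (2 powr (- (real t + 1) / 2) / RS_T t ^ j)
      * trig_poly_deriv (RS_Q_coeff t) (2 ^ t) j (x / RS_T t)"

lemma RS_alpha_beta_eq_deriv_0:
  "RS_alpha t x = RS_alpha_deriv t 0 x" "RS_beta t x = RS_beta_deriv t 0 x"
proof -
  have exp_power: "exp (\<i> * of_real y) ^ n = exp (\<i> * of_real (real n * y))" for y n
    by (simp add: exp_of_nat_mult[symmetric] mult_ac)
  show "RS_alpha t x = RS_alpha_deriv t 0 x" "RS_beta t x = RS_beta_deriv t 0 x"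
    unfolding RS_alpha_def RS_beta_def RS_alpha_deriv_def RS_beta_deriv_def
      trig_poly_deriv_def RS_P_Q_eq_coeff_sums[THEN conjunct1] RS_P_Q_eq_coeff_sums[THEN conjunct2]
      exp_power by simp_all
qed

lemma norm_RS_alpha_beta_deriv_le:
  "cmod (RS_alpha_deriv t j x) \<le> (1 / 1024) ^ j" "cmod (RS_beta_deriv t j x) \<le> (1 / 1024) ^ j"
proof -
  define c where "c = 2 powr (- (real t + 1) / 2)"
  have "sqrt (2 ^ Suc t) = 2 powr ((real t + 1) / 2)"
    by (simp add: powr_half_sqrt_powr powr_realpow[symmetric] add.commute powr_add)
  then have "c * sqrt (2 ^ Suc t) = 1"
    by (simp add: c_def powr_add[symmetric] field_simps)
  then have "c / RS_T t ^ j * ((2 ^ t) ^ j * sqrt (2 ^ Suc t)) = (1 / 1024) ^ j"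
    by (simp add: RS_T_def power_add field_simps)
  moreover have "c / RS_T t ^ j \<ge> 0"
    by (simp add: c_def RS_T_def)
  ultimately show "cmod (RS_alpha_deriv t j x) \<le> (1 / 1024) ^ j"
    and "cmod (RS_beta_deriv t j x) \<le> (1 / 1024) ^ j"
    unfolding RS_alpha_deriv_def RS_beta_deriv_def c_def[symmetric] norm_mult norm_of_real
    using norm_trig_poly_deriv_RS_le by (metis abs_of_nonneg mult_left_mono)+
qed

lemma higher_vderiv_RS_H:
  "higher_vderiv k (RS_H t) x =
     (\<Sum>j\<le>k. of_nat (k choose j) *
        (\<i> ^ (k - j) * exp (\<i> * of_real x) * RS_alpha_deriv t j x
         + (2 * \<i>) ^ (k - j) * exp (2 * \<i> * of_real x) * RS_beta_deriv t j x))"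
proof -
  define T where "T = RS_T t"
  define c :: complex where "c = of_real (2 powr (- (real t + 1) / 2))"
  define g where "g k x =
      c * (\<Sum>n<2 ^ t. RS_P_coeff t n * (\<i> * of_real (1 + real n / T)) ^ k
                        * exp (\<i> * of_real ((1 + real n / T) * x)))
    + c * (\<Sum>n<2 ^ t. RS_Q_coeff t n * (\<i> * of_real (2 + real n / T)) ^ k
                        * exp (\<i> * of_real ((2 + real n / T) * x)))"
    for k x
  have "T \<noteq> 0"
    by (simp add: T_def RS_T_def)
  have "RS_H t = g 0"
  proof
    fix y
    have exp_split: "exp (\<i> * of_real ((w + real n / T) * y)) =
        exp (\<i> * of_real (w * y)) * exp (\<i> * of_real (real n * (y / T)))" for w n
      by (simp add: exp_add[symmetric] algebra_simps)
    show "RS_H t y = g 0 y"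
      unfolding g_def exp_split
      by (simp add: RS_H_def RS_alpha_beta_eq_deriv_0 RS_alpha_deriv_def RS_beta_deriv_def
                    trig_poly_deriv_def T_def c_def sum_distrib_left mult_ac)
  qed
  moreover have "(g k has_vector_derivative g (Suc k) x) (at x)" for k x
    unfolding g_def
    by (intro has_vector_derivative_add has_vector_derivative_mult_right has_vector_derivative_exp_sum)
  ultimately have "higher_vderiv k (RS_H t) x = g k x"
    by (simp add: higher_vderiv_eqI)
  also have "\<dots> =
     (\<Sum>j\<le>k. of_nat (k choose j) *
        (\<i> ^ (k - j) * exp (\<i> * of_real x) * RS_alpha_deriv t j x
         + (2 * \<i>) ^ (k - j) * exp (2 * \<i> * of_real x) * RS_beta_deriv t j x))"
    unfolding g_def exp_sum_expand_trig_poly_deriv[OF \<open>T \<noteq> 0\<close>]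
    by (simp add: RS_alpha_deriv_def RS_beta_deriv_def T_def c_def sum_distrib_left sum.distrib
                  algebra_simps)
  finally show ?thesis .
qed

lemma norm_RS_H_Leibniz_term_le:
  "cmod (\<i> ^ (k - j) * exp (\<i> * of_real x) * RS_alpha_deriv t j x
         + (2 * \<i>) ^ (k - j) * exp (2 * \<i> * of_real x) * RS_beta_deriv t j x)
     \<le> (1 / 1024) ^ j * (1 + 2 ^ (k - j))"
proof -
  have "cmod (\<i> ^ (k - j) * exp (\<i> * of_real x) * RS_alpha_deriv t j x
         + (2 * \<i>) ^ (k - j) * exp (2 * \<i> * of_real x) * RS_beta_deriv t j x)
      \<le> cmod (RS_alpha_deriv t j x) + 2 ^ (k - j) * cmod (RS_beta_deriv t j x)"
    by (rule order_trans[OF norm_triangle_ineq]) (simp add: norm_mult norm_power)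
  also have "\<dots> \<le> (1 / 1024) ^ j + 2 ^ (k - j) * (1 / 1024) ^ j"
    using norm_RS_alpha_beta_deriv_le by (intro add_mono mult_left_mono) auto
  finally show ?thesis
    by (simp add: algebra_simps)
qed

theorem lemma3p7:
  fixes t k :: nat and x :: real
  assumes "odd t" and "t > 0" and "k \<le> 4"
  shows "cmod (higher_vderiv k (RS_H t) x
            - (\<i> ^ k * exp (\<i> * complex_of_real x) * RS_alpha t x
               + (2 * \<i>) ^ k * exp (2 * \<i> * complex_of_real x) * RS_beta t x)) \<le> 1 / 8
         \<and> cmod (higher_vderiv k (RS_H t) x) \<le> 2 ^ k + 2"
proof -
  define z where "z j = \<i> ^ (k - j) * exp (\<i> * of_real x) * RS_alpha_deriv t j x
      + (2 * \<i>) ^ (k - j) * exp (2 * \<i> * of_real x) * RS_beta_deriv t j x" for j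
  have z_le: "cmod (z j) \<le> (1 / 1024) ^ j * (1 + 2 ^ (k - j))" for j
    unfolding z_def by (rule norm_RS_H_Leibniz_term_le)
  have "(2 ^ k + 3 ^ k :: real) \<le> 2 ^ 4 + 3 ^ 4"
    using assms(3) by (intro add_mono power_increasing) auto
  then have err: "cmod (higher_vderiv k (RS_H t) x - z 0) \<le> 1 / 8"
    using norm_binomial_tail_le[of "1 / 1024" z k] z_le by (simp add: higher_vderiv_RS_H z_def)
  moreover have "z 0 = \<i> ^ k * exp (\<i> * of_real x) * RS_alpha t x
                      + (2 * \<i>) ^ k * exp (2 * \<i> * of_real x) * RS_beta t x"
    by (simp add: z_def RS_alpha_beta_eq_deriv_0)
  moreover have "cmod (higher_vderiv k (RS_H t) x) \<le> 2 ^ k + 2"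
    using err z_le[of 0] norm_triangle_sub[of "higher_vderiv k (RS_H t) x" "z 0"] by simp
  ultimately show ?thesis
    by simp
qed

end
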